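(* Let $D>0$, $g>0$, $l_{\mathrm{c}}>0$, $c_{\infty}>0$ and $c_{\mathrm{s}}\ge 0$ be constants, and consider pairs $(l_{\infty},c)$ with $l_{\infty}>0$ and $c\in C^2([0,l_{\infty}])$ satisfying \[ D c''(x)-g c(x)=0\ (0<x<l_{\infty}),\qquad D c'(l_{\infty})=-gl_{\mathrm{c}}c_{\infty},\qquad c(l_{\infty})=c_{\infty},\qquad c(0)=c_{\mathrm{s}} \] (steady-state solutions). Such a pair exists if and only if $c_{\mathrm{s}}>c_{\infty}$. In that case the steady-state solution is unique: $l_{\infty}>0$ is uniquely determined and \[ c(x)=\frac{c_{\infty}}{2}\left[\left(1-l_{\mathrm{c}}\sqrt{\tfrac{g}{D}}\right)\mathrm{e}^{(x-l_{\infty})\sqrt{g/D}}+\left(1+l_{\mathrm{c}}\sqrt{\tfrac{g}{D}}\right)\mathrm{e}^{-(x-l_{\infty})\sqrt{g/D}}\right],\quad 0\le x\le l_{\infty}, \] which is a decreasing function.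
   Context: This is the steady-state problem of a one-dimensional axonal growth model without active transport ($a=0$): $D$ is the diffusion coefficient, $g$ the degradation rate, $l_{\mathrm{c}}$ the characteristic growth-cone length, $c_{\infty}$ the steady-state growth cone concentration, $c_{\mathrm{s}}$ the soma concentration, and $l_{\infty}$ the axon length. The length $l_{\infty}$ is the unique positive solution of $\frac12\left[\left(1-l_{\mathrm{c}}\sqrt{g/D}\right)\mathrm{e}^{-l_{\infty}\sqrt{g/D}}+\left(1+l_{\mathrm{c}}\sqrt{g/D}\right)\mathrm{e}^{l_{\infty}\sqrt{g/D}}\right]=c_{\mathrm{s}}/c_{\infty}$. *)

theory Defs
  imports "HOL-Analysis.Analysis"
begin

definition steady_state ::
  "real \<Rightarrow> real \<Rightarrow> real \<Rightarrow> real \<Rightarrow> real \<Rightarrow> real \<Rightarrow> (real \<Rightarrow> real) \<Rightarrow> bool" where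
  "steady_state D g lc cinf cs l c \<longleftrightarrow>
     l > 0 \<and>
     (\<exists>c1 c2.
        (\<forall>x\<in>{0..l}. (c has_real_derivative c1 x) (at x within {0..l})) \<and>
        (\<forall>x\<in>{0..l}. (c1 has_real_derivative c2 x) (at x within {0..l})) \<and>
        continuous_on {0..l} c2 \<and>
        (\<forall>x. 0 < x \<and> x < l \<longrightarrow> D * c2 x - g * c x = 0) \<and>
        D * c1 l = - g * lc * cinf) \<and>
     c l = cinf \<and> c 0 = cs"

definition steady_profile :: "real \<Rightarrow> real \<Rightarrow> real \<Rightarrow> real \<Rightarrow> real \<Rightarrow> real \<Rightarrow> real" where
  "steady_profile D g lc cinf l x =
     cinf / 2 * ((1 - lc * sqrt (g / D)) * exp ((x - l) * sqrt (g / D))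
               + (1 + lc * sqrt (g / D)) * exp (- (x - l) * sqrt (g / D)))"

end

theory Submission
  imports Defs
begin

text \<open>With \<open>k = sqrt (g / D)\<close> the equation reads \<open>c'' = k\<^sup>2 c\<close>. Both boundary conditions at the
  tip \<open>x = l\<close> pin down the solution, which is the stated exponential profile; its derivative is
  negative, so it decreases. The soma value of this profile, viewed as a function of the length
  \<open>l\<close>, equals \<open>cinf\<close> at \<open>l = 0\<close>, is strictly increasing and unbounded, so it takes the value \<open>cs\<close>
  for some \<open>l > 0\<close> iff \<open>cs > cinf\<close>, and then for exactly one \<open>l\<close>.\<close>

definition profile :: "real \<Rightarrow> real \<Rightarrow> real \<Rightarrow> real \<Rightarrow> real \<Rightarrow> real" where
  "profile k lc cinf l x =
     cinf / 2 * ((1 - lc * k) * exp ((x - l) * k) + (1 + lc * k) * exp (- (x - l) * k))"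

definition dprofile :: "real \<Rightarrow> real \<Rightarrow> real \<Rightarrow> real \<Rightarrow> real \<Rightarrow> real" where
  "dprofile k lc cinf l x =
     cinf / 2 * k * ((1 - lc * k) * exp ((x - l) * k) - (1 + lc * k) * exp (- (x - l) * k))"

definition soma_value :: "real \<Rightarrow> real \<Rightarrow> real \<Rightarrow> real \<Rightarrow> real" where
  "soma_value k lc cinf l = profile k lc cinf l 0"

lemma steady_profile_eq_profile:
  "steady_profile D g lc cinf l = profile (sqrt (g / D)) lc cinf l"
  by (simp add: fun_eq_iff steady_profile_def profile_def)

lemma has_real_derivative_profile:
  "(profile k lc cinf l has_real_derivative dprofile k lc cinf l x) (at x)"
  unfolding profile_def dprofile_def
  by (auto intro!: derivative_eq_intros simp: algebra_simps)

lemma has_real_derivative_dprofile: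
  "(dprofile k lc cinf l has_real_derivative k\<^sup>2 * profile k lc cinf l x) (at x)"
  unfolding profile_def dprofile_def
  by (auto intro!: derivative_eq_intros simp: algebra_simps power2_eq_square)

lemma profile_at_tip: "profile k lc cinf l l = cinf"
  by (simp add: profile_def)

lemma dprofile_at_tip: "dprofile k lc cinf l l = - cinf * k\<^sup>2 * lc"
  by (simp add: dprofile_def algebra_simps power2_eq_square)

lemma dprofile_neg:
  assumes "k > 0" "lc > 0" "cinf > 0" "x \<le> l"
  shows "dprofile k lc cinf l x < 0"
proof -
  define E1 where "E1 = exp ((x - l) * k)"
  define E2 where "E2 = exp (- (x - l) * k)"
  have "E1 \<le> E2"
    using assms by (simp add: E1_def E2_def mult_nonpos_nonneg)
  moreover have "lc * k * E1 > 0" "lc * k * E2 > 0"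
    using assms by (simp_all add: E1_def E2_def)
  ultimately have "(1 - lc * k) * E1 - (1 + lc * k) * E2 < 0"
    by (simp add: algebra_simps)
  then show ?thesis
    using assms by (simp add: dprofile_def E1_def E2_def mult_pos_neg)
qed

lemma profile_strict_decreasing:
  assumes "k > 0" "lc > 0" "cinf > 0" "x < y" "y \<le> l"
  shows "profile k lc cinf l y < profile k lc cinf l x"
proof (rule DERIV_neg_imp_decreasing[OF \<open>x < y\<close>])
  fix z assume "z \<le> y"
  then show "\<exists>d. (profile k lc cinf l has_real_derivative d) (at z) \<and> d < 0"
    using has_real_derivative_profile dprofile_neg[OF assms(1-3), of z l] \<open>y \<le> l\<close>
    by (intro exI[of _ "dprofile k lc cinf l z"]) auto
qed

text \<open>The profile depends on \<open>x - l\<close> only, so the \<open>l\<close>-derivative of the soma value is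
  \<open>- dprofile\<close> at \<open>x = 0\<close>.\<close>

lemma has_real_derivative_soma_value:
  "(soma_value k lc cinf has_real_derivative - dprofile k lc cinf l 0) (at l)"
  unfolding soma_value_def profile_def dprofile_def
  by (auto intro!: derivative_eq_intros simp: algebra_simps)

lemma soma_value_at_0: "soma_value k lc cinf 0 = cinf"
  by (simp add: soma_value_def profile_def)

lemma soma_value_strict_mono:
  assumes "k > 0" "lc > 0" "cinf > 0" "0 \<le> a" "a < b"
  shows "soma_value k lc cinf a < soma_value k lc cinf b"
proof (rule DERIV_pos_imp_increasing[OF \<open>a < b\<close>])
  fix z assume "a \<le> z"
  then show "\<exists>d. (soma_value k lc cinf has_real_derivative d) (at z) \<and> d > 0"
    using has_real_derivative_soma_value dprofile_neg[OF assms(1-3), of 0 z] \<open>0 \<le> a\<close>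
    by (intro exI[of _ "- dprofile k lc cinf z 0"]) auto
qed

lemma soma_value_lower_bound:
  assumes "k > 0" "lc > 0" "cinf > 0" "l \<ge> 0"
  shows "cinf / 2 * ((1 + lc * k) * (l * k)) \<le> soma_value k lc cinf l"
proof -
  define a where "a = lc * k"
  define E where "E = exp (- (l * k))"
  have "a \<ge> 0" using assms by (simp add: a_def)
  have "0 < E" "E \<le> 1"
    using assms by (simp_all add: E_def)
  moreover have "a * E \<le> a"
    using mult_left_mono[OF \<open>E \<le> 1\<close> \<open>a \<ge> 0\<close>] by simp
  ultimately have "- a \<le> (1 - a) * E"
    by (simp add: left_diff_distrib)
  moreover have "(1 + a) * (1 + l * k) \<le> (1 + a) * exp (l * k)"
    using \<open>a \<ge> 0\<close> by (intro mult_left_mono) (simp_all add: exp_ge_add_one_self)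
  ultimately have "(1 + a) * (l * k) \<le> (1 - a) * E + (1 + a) * exp (l * k)"
    by (simp add: algebra_simps)
  then show ?thesis
    using assms by (simp add: soma_value_def profile_def a_def E_def)
qed

lemma soma_value_attains:
  assumes "k > 0" "lc > 0" "cinf > 0" "cs > cinf"
  obtains l where "l > 0" "soma_value k lc cinf l = cs"
proof -
  define L where "L = 2 * cs / (cinf * (1 + lc * k) * k)"
  have "cinf * (1 + lc * k) * k > 0"
    using assms by (simp add: add_pos_pos)
  then have "L > 0" and "cinf / 2 * ((1 + lc * k) * (L * k)) = cs"
    using assms by (simp_all add: L_def field_simps)
  then have "cs \<le> soma_value k lc cinf L"
    using soma_value_lower_bound[OF assms(1-3), of L] by simp
  then obtain l where "0 \<le> l" "soma_value k lc cinf l = cs"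
    using IVT[of "soma_value k lc cinf" 0 cs L] soma_value_at_0 assms \<open>L > 0\<close>
      has_real_derivative_soma_value[THEN DERIV_isCont] by auto
  moreover have "l \<noteq> 0"
    using \<open>soma_value k lc cinf l = cs\<close> soma_value_at_0 assms(4) by auto
  ultimately show ?thesis
    using that[of l] by simp
qed

lemma zero_if_deriv_zero_on_interior:
  fixes f f' :: "real \<Rightarrow> real"
  assumes deriv: "\<And>x. x \<in> {0..l} \<Longrightarrow> (f has_real_derivative f' x) (at x within {0..l})"
    and zero: "\<And>x. 0 < x \<Longrightarrow> x < l \<Longrightarrow> f' x = 0"
    and "f l = 0" "x \<in> {0..l}"
  shows "f x = 0"
proof -
  have "0 \<le> l"
    using \<open>x \<in> {0..l}\<close> by simp
  have "f y = f 0" if "y \<in> {0..l}" for y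
  proof (rule has_derivative_zero_unique_strong_interval[of "{0, l}" 0 l f])
    show "continuous_on {0..l} f"
      by (rule DERIV_continuous_on[OF deriv])
    show "(f has_derivative (\<lambda>h. 0)) (at z within {0..l})" if "z \<in> {0..l} - {0, l}" for z
      using deriv[of z] zero[of z] that
      by (simp add: has_field_derivative_def mult_zero_left[abs_def])
  qed (use that in simp_all)
  from this[of x] this[of l] show ?thesis
    using \<open>0 \<le> l\<close> \<open>f l = 0\<close> \<open>x \<in> {0..l}\<close> by simp
qed

text \<open>Uniqueness for \<open>w'' = k\<^sup>2 w\<close> with zero data at the right end: the first integrals
  \<open>(w' \<plusminus> k w) e\<^bsup>\<mp>kx\<^esup>\<close> have zero derivative and vanish at \<open>l\<close>.\<close>

lemma terminal_value_problem_zero: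
  fixes w w' w'' :: "real \<Rightarrow> real"
  assumes "k > 0"
    and dw: "\<And>x. x \<in> {0..l} \<Longrightarrow> (w has_real_derivative w' x) (at x within {0..l})"
    and dw': "\<And>x. x \<in> {0..l} \<Longrightarrow> (w' has_real_derivative w'' x) (at x within {0..l})"
    and ode: "\<And>x. 0 < x \<Longrightarrow> x < l \<Longrightarrow> w'' x = k\<^sup>2 * w x"
    and "w l = 0" "w' l = 0" "x \<in> {0..l}"
  shows "w x = 0"
proof -
  have first_integral: "(w' x + s * k * w x) * exp (- s * k * x) = 0" if "s\<^sup>2 = 1" for s
  proof (rule zero_if_deriv_zero_on_interior[where
        f = "\<lambda>x. (w' x + s * k * w x) * exp (- s * k * x)" and x = x and f' = "\<lambda>y. (w'' y + s * k * w' y) * exp (- s * k * y)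
          + (w' y + s * k * w y) * (exp (- s * k * y) * (- s * k))"])
    show "((\<lambda>x. (w' x + s * k * w x) * exp (- s * k * x)) has_real_derivative
        (w'' y + s * k * w' y) * exp (- s * k * y)
          + (w' y + s * k * w y) * (exp (- s * k * y) * (- s * k))) (at y within {0..l})"
      if "y \<in> {0..l}" for y
      using dw[OF that] dw'[OF that] by (auto intro!: derivative_eq_intros)
    show "(w'' y + s * k * w' y) * exp (- s * k * y)
        + (w' y + s * k * w y) * (exp (- s * k * y) * (- s * k)) = 0"
      if "0 < y" "y < l" for y
    proof -
      have "w'' y - s\<^sup>2 * k\<^sup>2 * w y = 0"
        using ode[OF that] \<open>s\<^sup>2 = 1\<close> by simp
      then show ?thesis
        by (simp add: algebra_simps power2_eq_square)
    qed
  qed (use assms(5-7) in auto)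
  from first_integral[of 1] first_integral[of "-1"] have "w' x + k * w x = 0" "w' x - k * w x = 0"
    by simp_all
  then show ?thesis
    using \<open>k > 0\<close> by simp
qed

lemma steady_state_eq_profile:
  assumes "D > 0" "g > 0" "steady_state D g lc cinf cs l c" "x \<in> {0..l}"
  shows "c x = profile (sqrt (g / D)) lc cinf l x"
proof -
  define k where "k = sqrt (g / D)"
  have "k > 0" "k\<^sup>2 = g / D"
    using assms by (simp_all add: k_def)
  then have "D * k\<^sup>2 = g"
    using \<open>D > 0\<close> by simp
  from assms(3) obtain c' c''
    where dc: "\<forall>x\<in>{0..l}. (c has_real_derivative c' x) (at x within {0..l})"
      and dc': "\<forall>x\<in>{0..l}. (c' has_real_derivative c'' x) (at x within {0..l})"
      and ode: "\<forall>x. 0 < x \<and> x < l \<longrightarrow> D * c'' x - g * c x = 0"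
      and flux: "D * c' l = - g * lc * cinf" and "c l = cinf"
    unfolding steady_state_def by blast
  have "c x - profile k lc cinf l x = 0"
  proof (rule terminal_value_problem_zero[OF \<open>k > 0\<close>, where
        w = "\<lambda>x. c x - profile k lc cinf l x" and x = x and w' = "\<lambda>x. c' x - dprofile k lc cinf l x" and w'' = "\<lambda>x. c'' x - k\<^sup>2 * profile k lc cinf l x"])
    show "((\<lambda>x. c x - profile k lc cinf l x) has_real_derivative c' y - dprofile k lc cinf l y)
        (at y within {0..l})" if "y \<in> {0..l}" for y
      using dc that has_real_derivative_profile[THEN has_field_derivative_at_within]
      by (intro DERIV_diff) auto
    show "((\<lambda>x. c' x - dprofile k lc cinf l x) has_real_derivative
        c'' y - k\<^sup>2 * profile k lc cinf l y) (at y within {0..l})" if "y \<in> {0..l}" for y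
      using dc' that has_real_derivative_dprofile[THEN has_field_derivative_at_within]
      by (intro DERIV_diff) auto
    show "c'' y - k\<^sup>2 * profile k lc cinf l y = k\<^sup>2 * (c y - profile k lc cinf l y)"
      if "0 < y" "y < l" for y
    proof -
      have "D * c'' y = D * (k\<^sup>2 * c y)"
        using ode that \<open>k\<^sup>2 = g / D\<close> \<open>D > 0\<close> by simp
      then show ?thesis
        using \<open>D > 0\<close> by (simp add: algebra_simps)
    qed
    have "D * (c' l - dprofile k lc cinf l l) = 0"
      using flux \<open>D * k\<^sup>2 = g\<close> by (simp add: dprofile_at_tip algebra_simps)
    then show "c' l - dprofile k lc cinf l l = 0"
      using \<open>D > 0\<close> by simp
  qed (use \<open>c l = cinf\<close> assms(4) in \<open>simp_all add: profile_at_tip\<close>)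
  then show ?thesis
    by (simp add: k_def)
qed

lemma profile_steady_state:
  assumes "D > 0" "g > 0" "l > 0"
  shows "steady_state D g lc cinf (soma_value (sqrt (g / D)) lc cinf l) l
           (profile (sqrt (g / D)) lc cinf l)"
proof -
  define k where "k = sqrt (g / D)"
  have "k\<^sup>2 = g / D"
    using assms by (simp add: k_def)
  have "continuous_on {0..l} (\<lambda>x. k\<^sup>2 * profile k lc cinf l x)"
    unfolding profile_def by (intro continuous_intros)
  moreover have "D * (k\<^sup>2 * profile k lc cinf l x) - g * profile k lc cinf l x = 0" for x
    using assms \<open>k\<^sup>2 = g / D\<close> by (simp add: field_simps)
  moreover have "D * dprofile k lc cinf l l = - g * lc * cinf"
    using assms \<open>k\<^sup>2 = g / D\<close> by (simp add: dprofile_at_tip field_simps)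
  ultimately have "\<exists>c' c''.
      (\<forall>x\<in>{0..l}. (profile k lc cinf l has_real_derivative c' x) (at x within {0..l})) \<and>
      (\<forall>x\<in>{0..l}. (c' has_real_derivative c'' x) (at x within {0..l})) \<and>
      continuous_on {0..l} c'' \<and>
      (\<forall>x. 0 < x \<and> x < l \<longrightarrow> D * c'' x - g * profile k lc cinf l x = 0) \<and>
      D * c' l = - g * lc * cinf"
    using has_real_derivative_profile[THEN has_field_derivative_at_within]
      has_real_derivative_dprofile[THEN has_field_derivative_at_within]
    by (intro exI[of _ "dprofile k lc cinf l"] exI[of _ "\<lambda>x. k\<^sup>2 * profile k lc cinf l x"]
        conjI ballI allI impI) simp_all
  then show ?thesis
    unfolding steady_state_def k_def[symmetric] soma_value_def
    using \<open>l > 0\<close> by (simp add: profile_at_tip)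
qed

lemma steady_state_soma_value:
  assumes "D > 0" "g > 0" "steady_state D g lc cinf cs l c"
  shows "l > 0" "soma_value (sqrt (g / D)) lc cinf l = cs"
  using assms steady_state_eq_profile[OF assms, of 0]
  by (auto simp: steady_state_def soma_value_def)

theorem theorem2:
  fixes D g lc cinf cs :: real
  assumes "D > 0" and "g > 0" and "lc > 0" and "cinf > 0" and "cs \<ge> 0"
  shows "((\<exists>l c. steady_state D g lc cinf cs l c) \<longleftrightarrow> cs > cinf)
    \<and> (cs > cinf \<longrightarrow> (\<exists>!l. \<exists>c. steady_state D g lc cinf cs l c))
    \<and> (\<forall>l c. steady_state D g lc cinf cs l c \<longrightarrow>
          (\<forall>x\<in>{0..l}. c x = steady_profile D g lc cinf l x)
        \<and> (\<forall>x\<in>{0..l}. \<forall>y\<in>{0..l}. x < y \<longrightarrow> c y < c x))"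
proof -
  define k where "k = sqrt (g / D)"
  have "k > 0" using assms by (simp add: k_def)
  note soma = steady_state_soma_value[OF assms(1,2), folded k_def]
  note mono = soma_value_strict_mono[OF \<open>k > 0\<close> assms(3,4)]
  have necessary: "cs > cinf" if "steady_state D g lc cinf cs l c" for l c
    using soma[OF that] mono[of 0 l] soma_value_at_0 by auto
  have sufficient: "\<exists>l c. steady_state D g lc cinf cs l c" if "cs > cinf"
  proof -
    obtain l where "l > 0" "soma_value k lc cinf l = cs"
      using soma_value_attains[OF \<open>k > 0\<close> assms(3,4) \<open>cs > cinf\<close>] .
    then show ?thesis
      using profile_steady_state[OF assms(1,2), folded k_def] by blast
  qed
  have length_unique: "l = l'"
    if "steady_state D g lc cinf cs l c" "steady_state D g lc cinf cs l' c'" for l l' c c'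
    using soma[OF that(1)] soma[OF that(2)] mono[of l l'] mono[of l' l]
    by (cases l l' rule: linorder_cases) auto
  have profile: "c x = steady_profile D g lc cinf l x"
    if "steady_state D g lc cinf cs l c" "x \<in> {0..l}" for l c x
    using steady_state_eq_profile[OF assms(1,2) that] by (simp add: steady_profile_eq_profile)
  have decreasing: "c y < c x"
    if "steady_state D g lc cinf cs l c" "x \<in> {0..l}" "y \<in> {0..l}" "x < y" for l c x y
    using that steady_state_eq_profile[OF assms(1,2) that(1)]
      profile_strict_decreasing[OF \<open>k > 0\<close> assms(3,4), of x y l] by (simp add: k_def)
  show ?thesis
    using necessary sufficient length_unique profile decreasing by blast
qed

end
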